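(* Let $f\in R=D[t;\sigma,\delta]$ be monic of degree $m\ge2$ and irreducible. (i) If $\sigma$ is surjective and $D=\mathrm{Nuc}_r(S_f)$, then $f$ is bounded and $S_f$ is a division algebra. (ii) If $f$ is bounded, then $S_f$ is a division algebra.
   Context: $D$ is an associative division ring, $\sigma$ a ring endomorphism of $D$, $\delta$ a left $\sigma$-derivation. $R=D[t;\sigma,\delta]$ is the skew polynomial ring with $ta=\sigma(a)t+\delta(a)$. For monic $f$ of degree $m$, $S_f$ is the set of polynomials of degree $<m$ with multiplication $g\circ h=$ remainder of $gh$ upon right division by $f$. $\mathrm{Nuc}_r(S_f)=\{x: (yz)x=y(zx)\ \forall y,z\in S_f\}$. $f$ is bounded if there exists $0\neq f^*\in R$ such that $Rf^*=f^*R$ is the largest two-sided ideal of $R$ contained in $Rf$. $f$ irreducible means it is not a unit and has no factorization $f=gh$ with $\deg g,\deg h<\deg f$. $S_f$ is a division algebra if left and right multiplication by every nonzero element are bijective. *)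

theory Defs
  imports "HOL-Computational_Algebra.Polynomial"
begin

text \<open>Skew polynomials D[t;sigma,delta] over a (possibly noncommutative) division ring,
represented by their coefficient sequences (type 'a poly, used only as a carrier of
coefficients: sum_i a_i t^i with coefficients written on the left).
The multiplication is the skew one, determined by t a = sigma(a) t + delta(a).\<close>

definition ring_endo :: "('a::division_ring \<Rightarrow> 'a) \<Rightarrow> bool" where
  "ring_endo \<sigma> \<longleftrightarrow> (\<forall>a b. \<sigma> (a + b) = \<sigma> a + \<sigma> b) \<and> (\<forall>a b. \<sigma> (a * b) = \<sigma> a * \<sigma> b) \<and> \<sigma> 1 = 1"

definition left_sigma_derivation :: "('a::division_ring \<Rightarrow> 'a) \<Rightarrow> ('a \<Rightarrow> 'a) \<Rightarrow> bool" where
  "left_sigma_derivation \<sigma> \<delta> \<longleftrightarrow> (\<forall>a b. \<delta> (a + b) = \<delta> a + \<delta> b) \<and>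
     (\<forall>a b. \<delta> (a * b) = \<sigma> a * \<delta> b + \<delta> a * b)"

definition lsmult :: "'a::division_ring \<Rightarrow> 'a poly \<Rightarrow> 'a poly" where
  "lsmult a p = map_poly (\<lambda>c. a * c) p"

text \<open>t * p, using t a_i t^i = sigma(a_i) t^(i+1) + delta(a_i) t^i\<close>
definition skew_tmul :: "('a::division_ring \<Rightarrow> 'a) \<Rightarrow> ('a \<Rightarrow> 'a) \<Rightarrow> 'a poly \<Rightarrow> 'a poly" where
  "skew_tmul \<sigma> \<delta> p = pCons 0 (map_poly \<sigma> p) + map_poly \<delta> p"

definition skew_mult :: "('a::division_ring \<Rightarrow> 'a) \<Rightarrow> ('a \<Rightarrow> 'a) \<Rightarrow> 'a poly \<Rightarrow> 'a poly \<Rightarrow> 'a poly" where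
  "skew_mult \<sigma> \<delta> p q = (\<Sum>i\<le>degree p. lsmult (coeff p i) ((skew_tmul \<sigma> \<delta> ^^ i) q))"

definition skew_unit :: "('a::division_ring \<Rightarrow> 'a) \<Rightarrow> ('a \<Rightarrow> 'a) \<Rightarrow> 'a poly \<Rightarrow> bool" where
  "skew_unit \<sigma> \<delta> f \<longleftrightarrow> (\<exists>g. skew_mult \<sigma> \<delta> f g = [:1:] \<and> skew_mult \<sigma> \<delta> g f = [:1:])"

definition skew_irreducible :: "('a::division_ring \<Rightarrow> 'a) \<Rightarrow> ('a \<Rightarrow> 'a) \<Rightarrow> 'a poly \<Rightarrow> bool" where
  "skew_irreducible \<sigma> \<delta> f \<longleftrightarrow> \<not> skew_unit \<sigma> \<delta> f \<and>
     \<not> (\<exists>g h. f = skew_mult \<sigma> \<delta> g h \<and> degree g < degree f \<and> degree h < degree f)"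

definition skew_rmod :: "('a::division_ring \<Rightarrow> 'a) \<Rightarrow> ('a \<Rightarrow> 'a) \<Rightarrow> 'a poly \<Rightarrow> 'a poly \<Rightarrow> 'a poly" where
  "skew_rmod \<sigma> \<delta> g f = (THE r. degree r < degree f \<and> (\<exists>q. g = skew_mult \<sigma> \<delta> q f + r))"

definition Sf_carrier :: "'a::division_ring poly \<Rightarrow> 'a poly set" where
  "Sf_carrier f = {g. degree g < degree f}"

definition Sf_mult :: "('a::division_ring \<Rightarrow> 'a) \<Rightarrow> ('a \<Rightarrow> 'a) \<Rightarrow> 'a poly \<Rightarrow> 'a poly \<Rightarrow> 'a poly \<Rightarrow> 'a poly" where
  "Sf_mult \<sigma> \<delta> f g h = skew_rmod \<sigma> \<delta> (skew_mult \<sigma> \<delta> g h) f"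

definition Sf_nuc_r :: "('a::division_ring \<Rightarrow> 'a) \<Rightarrow> ('a \<Rightarrow> 'a) \<Rightarrow> 'a poly \<Rightarrow> 'a poly set" where
  "Sf_nuc_r \<sigma> \<delta> f = {x \<in> Sf_carrier f. \<forall>y\<in>Sf_carrier f. \<forall>z\<in>Sf_carrier f.
      Sf_mult \<sigma> \<delta> f (Sf_mult \<sigma> \<delta> f y z) x = Sf_mult \<sigma> \<delta> f y (Sf_mult \<sigma> \<delta> f z x)}"

definition Sf_division_algebra :: "('a::division_ring \<Rightarrow> 'a) \<Rightarrow> ('a \<Rightarrow> 'a) \<Rightarrow> 'a poly \<Rightarrow> bool" where
  "Sf_division_algebra \<sigma> \<delta> f \<longleftrightarrow> (\<forall>a\<in>Sf_carrier f. a \<noteq> 0 \<longrightarrow>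
      bij_betw (\<lambda>x. Sf_mult \<sigma> \<delta> f a x) (Sf_carrier f) (Sf_carrier f) \<and>
      bij_betw (\<lambda>x. Sf_mult \<sigma> \<delta> f x a) (Sf_carrier f) (Sf_carrier f))"

definition skew_two_sided_ideal :: "('a::division_ring \<Rightarrow> 'a) \<Rightarrow> ('a \<Rightarrow> 'a) \<Rightarrow> 'a poly set \<Rightarrow> bool" where
  "skew_two_sided_ideal \<sigma> \<delta> I \<longleftrightarrow> 0 \<in> I \<and> (\<forall>x\<in>I. \<forall>y\<in>I. x - y \<in> I) \<and>
     (\<forall>x\<in>I. \<forall>r. skew_mult \<sigma> \<delta> r x \<in> I \<and> skew_mult \<sigma> \<delta> x r \<in> I)"

definition skew_left_ideal_gen :: "('a::division_ring \<Rightarrow> 'a) \<Rightarrow> ('a \<Rightarrow> 'a) \<Rightarrow> 'a poly \<Rightarrow> 'a poly set" where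
  "skew_left_ideal_gen \<sigma> \<delta> f = {skew_mult \<sigma> \<delta> g f | g. True}"

definition skew_right_ideal_gen :: "('a::division_ring \<Rightarrow> 'a) \<Rightarrow> ('a \<Rightarrow> 'a) \<Rightarrow> 'a poly \<Rightarrow> 'a poly set" where
  "skew_right_ideal_gen \<sigma> \<delta> f = {skew_mult \<sigma> \<delta> f g | g. True}"

definition skew_bounded :: "('a::division_ring \<Rightarrow> 'a) \<Rightarrow> ('a \<Rightarrow> 'a) \<Rightarrow> 'a poly \<Rightarrow> bool" where
  "skew_bounded \<sigma> \<delta> f \<longleftrightarrow> (\<exists>fs. fs \<noteq> 0 \<and>
     skew_left_ideal_gen \<sigma> \<delta> fs = skew_right_ideal_gen \<sigma> \<delta> fs \<and>
     skew_left_ideal_gen \<sigma> \<delta> fs \<subseteq> skew_left_ideal_gen \<sigma> \<delta> f \<and>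
     (\<forall>I. skew_two_sided_ideal \<sigma> \<delta> I \<and> I \<subseteq> skew_left_ideal_gen \<sigma> \<delta> f \<longrightarrow>
          I \<subseteq> skew_left_ideal_gen \<sigma> \<delta> fs))"

end

theory Submission
  imports Defs
begin

(*
  Write m = deg f. Irreducibility of f makes S_f free of zero divisors: if y z lies in R f
  with y, z nonzero of degree < m, then by Bezout (R z + R f = R) the left D-linear map
  w \<mapsto> w z mod f sends the polynomials of degree < deg y onto the m-dimensional left
  D-space S_f, which is absurd. Hence right multiplication by a nonzero element is an
  injective left D-linear endomorphism of S_f, thus bijective. Left multiplication is not
  linear, and this is where boundedness enters: for a bound f* the descending chain of right
  ideals a^n R + f* R becomes stationary, so a^n b lies in a^(n+1) R + R f, and cancelling
  a^n gives a y = b mod R f. This proves (ii); boundedness also forces \<sigma> to be surjective,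
  which provides the division with remainder g = h q + r needed for right ideals.

  For (i), a right nucleus equal to D gives f D \<subseteq> R f. With \<sigma> surjective, every
  polynomial of degree < m is a right D-combination of 1, t, ..., t^(m-1), so x R \<subseteq> R f
  as soon as x t^j \<in> R f for all j < m. These are finitely many left linear conditions on x,
  so the annihilator {x. x R \<subseteq> R f} of R/Rf is a nonzero two-sided ideal; its element of
  least degree generates it from both sides and is a bound of f.
*)

section \<open>Polynomials of bounded degree and left linear maps\<close>

lemma left_dependence_of_reduced_family:
  fixes v :: "nat \<Rightarrow> nat \<Rightarrow> 'a::division_ring"
  assumes "finite K" and "p \<in> K" and "\<exists>k\<in>K - {p}. c k \<noteq> 0"
    and "\<forall>i. (\<Sum>k\<in>K - {p}. c k * (v k i - a k * v p i)) = 0"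
  shows "\<exists>c. (\<exists>k\<in>K. c k \<noteq> 0) \<and> (\<forall>i. (\<Sum>k\<in>K. c k * v k i) = 0)"
proof -
  define c' where "c' = c(p := - (\<Sum>k\<in>K - {p}. c k * a k))"
  have "(\<Sum>k\<in>K. c' k * v k i) = 0" for i
  proof -
    have "(\<Sum>k\<in>K. c' k * v k i) = c' p * v p i + (\<Sum>k\<in>K - {p}. c k * v k i)"
      using assms(1,2) by (simp add: sum.remove c'_def)
    also have "(\<Sum>k\<in>K - {p}. c k * v k i)
        = (\<Sum>k\<in>K - {p}. c k * (v k i - a k * v p i)) + (\<Sum>k\<in>K - {p}. c k * a k) * v p i"
      by (simp add: right_diff_distrib sum_subtractf sum_distrib_right mult.assoc)
    finally show ?thesis using assms(4) by (simp add: c'_def)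
  qed
  moreover have "\<exists>k\<in>K. c' k \<noteq> 0" using assms(3) by (auto simp: c'_def)
  ultimately show ?thesis by blast
qed

lemma exists_left_dependence:
  fixes v :: "nat \<Rightarrow> nat \<Rightarrow> 'a::division_ring"
  assumes "finite K" and "n < card K" and "\<forall>k\<in>K. \<forall>i\<ge>n. v k i = 0"
  shows "\<exists>c. (\<exists>k\<in>K. c k \<noteq> 0) \<and> (\<forall>i. (\<Sum>k\<in>K. c k * v k i) = 0)"
  using assms
proof (induction n arbitrary: K v)
  case 0
  then obtain k where "k \<in> K" by fastforce
  with 0 show ?case by (intro exI[of _ "\<lambda>_. 1"]) auto
next
  case (Suc n)
  show ?case
  proof (cases "\<forall>k\<in>K. v k n = 0")
    case True
    then have "\<forall>k\<in>K. \<forall>i\<ge>n. v k i = 0" using Suc.prems(3)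
      by (metis le_antisym not_less_eq_eq)
    then show ?thesis using Suc.IH[of K v] Suc.prems by auto
  next
    case False
    then obtain p where p: "p \<in> K" "v p n \<noteq> 0" by blast
    define a where "a k = v k n * inverse (v p n)" for k
    have "finite (K - {p})" and "n < card (K - {p})" using Suc.prems p by simp_all
    moreover have "\<forall>k\<in>K - {p}. \<forall>i\<ge>n. v k i - a k * v p i = 0"
    proof (intro ballI allI impI)
      fix k i assume "k \<in> K - {p}" and "n \<le> i"
      then show "v k i - a k * v p i = 0"
        using Suc.prems(3) p by (cases "i = n") (simp_all add: a_def mult.assoc)
    qed
    ultimately obtain c where c: "\<exists>k\<in>K - {p}. c k \<noteq> 0"
      "\<forall>i. (\<Sum>k\<in>K - {p}. c k * (v k i - a k * v p i)) = 0"
      using Suc.IH[of "K - {p}" "\<lambda>k i. v k i - a k * v p i"] by blast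
    show ?thesis by (rule left_dependence_of_reduced_family[OF Suc.prems(1) p(1) c])
  qed
qed

definition polys_below :: "nat \<Rightarrow> 'a::zero poly set" where
  "polys_below n = {p. \<forall>i\<ge>n. coeff p i = 0}"

lemma mem_polys_below_iff: "p \<in> polys_below n \<longleftrightarrow> p = 0 \<or> degree p < n"
proof
  assume "p \<in> polys_below n"
  then show "p = 0 \<or> degree p < n"
    unfolding polys_below_def using leading_coeff_0_iff not_less by blast
qed (auto simp: polys_below_def coeff_eq_0)

lemma zero_mem_polys_below [simp]: "0 \<in> polys_below n"
  by (simp add: polys_below_def)

lemma polys_below_eq: "0 < n \<Longrightarrow> polys_below n = {p. degree p < n}"
  by (auto simp: mem_polys_below_iff)

lemma diff_mem_polys_below:
  "p \<in> polys_below n \<Longrightarrow> q \<in> polys_below n \<Longrightarrow> p - q \<in> polys_below n"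
  by (simp add: polys_below_def)

lemma sum_mem_polys_below:
  "(\<And>k. k \<in> K \<Longrightarrow> u k \<in> polys_below n) \<Longrightarrow> (\<Sum>k\<in>K. u k) \<in> polys_below n"
  by (induction K rule: infinite_finite_induct) (auto simp: polys_below_def)

lemma diff_mem_polys_below_if_same_lead_coeff:
  assumes "degree p = n" and "degree q = n" and "lead_coeff p = lead_coeff q"
  shows "p - q \<in> polys_below n"
  using assms by (auto simp: polys_below_def le_less coeff_eq_0)

lemma exists_min_degree:
  assumes "y \<in> I" and "y \<noteq> 0"
  obtains h where "h \<in> I" and "h \<noteq> 0" and "\<And>x. x \<in> I \<Longrightarrow> x \<noteq> 0 \<Longrightarrow> degree h \<le> degree x"
  using ex_has_least_nat[of "\<lambda>x. x \<in> I \<and> x \<noteq> 0" y degree] assms by blast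

lemma coeff_lsmult: "coeff (lsmult c p) i = c * coeff p i"
  by (simp add: lsmult_def coeff_map_poly)

lemma lsmult_0_left [simp]: "lsmult 0 p = 0"
  and lsmult_1_left [simp]: "lsmult 1 p = p"
  and lsmult_0_right [simp]: "lsmult c 0 = 0"
  by (simp_all add: poly_eq_iff coeff_lsmult)

lemma lsmult_add_left: "lsmult (a + b) p = lsmult a p + lsmult b p"
  and lsmult_lsmult: "lsmult a (lsmult b p) = lsmult (a * b) p"
  and lsmult_monom: "lsmult c (monom d i) = monom (c * d) i"
  by (simp_all add: poly_eq_iff coeff_lsmult algebra_simps)

lemma additive_lsmult: "additive (lsmult c)"
  by unfold_locales (simp add: poly_eq_iff coeff_lsmult algebra_simps)

lemmas lsmult_add_right = additive.add[OF additive_lsmult]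
lemmas lsmult_minus_right = additive.minus[OF additive_lsmult]
lemmas lsmult_sum_right = additive.sum[OF additive_lsmult]

lemma degree_lsmult_le: "degree (lsmult c p) \<le> degree p"
  by (rule degree_le) (simp add: coeff_lsmult coeff_eq_0)

lemma degree_lsmult:
  assumes "c \<noteq> 0"
  shows "degree (lsmult c p) = degree p"
proof (cases "p = 0")
  case False
  then have "coeff (lsmult c p) (degree p) \<noteq> 0" using assms by (simp add: coeff_lsmult)
  then show ?thesis using le_degree degree_lsmult_le le_antisym by blast
qed simp

lemma lead_coeff_lsmult: "c \<noteq> 0 \<Longrightarrow> lead_coeff (lsmult c p) = c * lead_coeff p"
  by (simp add: degree_lsmult coeff_lsmult)

lemma lsmult_mem_polys_below: "p \<in> polys_below n \<Longrightarrow> lsmult c p \<in> polys_below n"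
  by (simp add: polys_below_def coeff_lsmult)

lemma coeff_sum_lsmult_monom:
  assumes "finite K" and "j \<in> K"
  shows "coeff (\<Sum>k\<in>K. lsmult (c k) (monom 1 k)) j = c j"
  using assms by (simp add: coeff_sum coeff_lsmult if_distrib cong: if_cong)

lemma sum_lsmult_monom_mem_polys_below: "(\<Sum>k<n. lsmult (c k) (monom 1 k)) \<in> polys_below n"
  by (rule sum_mem_polys_below) (simp add: polys_below_def coeff_lsmult)

definition left_linear :: "('a::division_ring poly \<Rightarrow> 'a poly) \<Rightarrow> bool" where
  "left_linear \<phi> \<longleftrightarrow> additive \<phi> \<and> (\<forall>c x. \<phi> (lsmult c x) = lsmult c (\<phi> x))"

lemma left_linear_sum:
  assumes "left_linear \<phi>"
  shows "\<phi> (\<Sum>k\<in>K. lsmult (c k) (u k)) = (\<Sum>k\<in>K. lsmult (c k) (\<phi> (u k)))"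
proof -
  from assms have "additive \<phi>" and "\<And>c x. \<phi> (lsmult c x) = lsmult c (\<phi> x)"
    by (auto simp: left_linear_def)
  then show ?thesis by (simp add: additive.sum)
qed

lemma left_linear_surj_on_polys_below:
  assumes lin: "left_linear \<phi>"
    and into: "\<phi> ` polys_below n \<subseteq> polys_below n"
    and ker: "\<And>x. x \<in> polys_below n \<Longrightarrow> \<phi> x = 0 \<Longrightarrow> x = 0"
    and b: "b \<in> polys_below n"
  shows "b \<in> \<phi> ` polys_below n"
proof (rule ccontr)
  assume b_notin: "b \<notin> \<phi> ` polys_below n"
  define u where "u k = (if k < n then \<phi> (monom 1 k) else b)" for k
  have "u k \<in> polys_below n" for k
    using into b by (auto simp: u_def polys_below_def image_subset_iff)
  then obtain c where c: "\<exists>k\<in>{..n}. c k \<noteq> 0" "\<forall>i. (\<Sum>k\<in>{..n}. c k * coeff (u k) i) = 0"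
    using exists_left_dependence[of "{..n}" n "\<lambda>k. coeff (u k)"] by (auto simp: polys_below_def)
  define y where "y = (\<Sum>k<n. lsmult (c k) (monom 1 k))"
  have "0 = (\<Sum>k\<in>{..n}. lsmult (c k) (u k))"
    by (rule poly_eqI) (simp add: coeff_sum coeff_lsmult c(2))
  also have "\<dots> = (\<Sum>k<n. lsmult (c k) (u k)) + lsmult (c n) b"
    by (simp add: lessThan_Suc_atMost[symmetric] u_def)
  also have "(\<Sum>k<n. lsmult (c k) (u k)) = \<phi> y"
    by (simp add: y_def left_linear_sum[OF lin] u_def)
  finally have y_b: "\<phi> y + lsmult (c n) b = 0" ..
  show False
  proof (cases "c n = 0")
    case True
    then obtain j where j: "j < n" "c j \<noteq> 0" using c(1) by (metis atMost_iff le_neq_implies_less)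
    have "\<phi> y = 0" using y_b True by simp
    then have "y = 0" using ker sum_lsmult_monom_mem_polys_below y_def by blast
    moreover have "coeff y j = c j" using j by (simp add: y_def coeff_sum_lsmult_monom)
    ultimately show False using j by simp
  next
    case False
    have "b = lsmult (inverse (c n)) (lsmult (c n) b)" using False by (simp add: lsmult_lsmult)
    also have "lsmult (c n) b = - \<phi> y" using y_b by (simp add: eq_neg_iff_add_eq_0 add.commute)
    also have "lsmult (inverse (c n)) (- \<phi> y) = \<phi> (lsmult (- inverse (c n)) y)"
      using lin by (simp add: left_linear_def lsmult_minus_right poly_eq_iff coeff_lsmult)
    finally show False
      using b_notin lsmult_mem_polys_below sum_lsmult_monom_mem_polys_below y_def by blast
  qed
qed

lemma left_linear_bij_betw_polys_below:
  assumes lin: "left_linear \<phi>"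
    and into: "\<phi> ` polys_below n \<subseteq> polys_below n"
    and ker: "\<And>x. x \<in> polys_below n \<Longrightarrow> \<phi> x = 0 \<Longrightarrow> x = 0"
  shows "bij_betw \<phi> (polys_below n) (polys_below n)"
proof -
  have "inj_on \<phi> (polys_below n)"
  proof (rule inj_onI)
    fix x y assume "x \<in> polys_below n" "y \<in> polys_below n" "\<phi> x = \<phi> y"
    moreover have "\<phi> (x - y) = \<phi> x - \<phi> y"
      using lin by (simp add: left_linear_def additive.diff)
    ultimately show "x = y" using ker[of "x - y"] diff_mem_polys_below by force
  qed
  then show ?thesis
    using into left_linear_surj_on_polys_below[OF lin into ker] by (auto simp: bij_betw_def)
qed

lemma le_if_monoms_in_left_linear_image:
  assumes lin: "left_linear \<phi>" and monoms: "\<And>i. i < n \<Longrightarrow> monom 1 i \<in> \<phi> ` polys_below p"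
  shows "n \<le> p"
proof (rule ccontr)
  assume "\<not> n \<le> p"
  have "\<forall>i\<in>{..<n}. \<exists>v. v \<in> polys_below p \<and> \<phi> v = monom 1 i"
    using monoms by (metis image_iff lessThan_iff)
  then obtain u where u: "\<forall>i\<in>{..<n}. u i \<in> polys_below p \<and> \<phi> (u i) = monom 1 i"
    by (rule bchoice[elim_format]) blast
  obtain c where c: "\<exists>k\<in>{..<n}. c k \<noteq> 0" "\<forall>i. (\<Sum>k<n. c k * coeff (u k) i) = 0"
    using exists_left_dependence[of "{..<n}" p "\<lambda>k. coeff (u k)"] \<open>\<not> n \<le> p\<close> u
    by (auto simp: polys_below_def)
  have "(\<Sum>k<n. lsmult (c k) (u k)) = 0"
    by (rule poly_eqI) (simp add: coeff_sum coeff_lsmult c(2))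
  then have "\<phi> (\<Sum>k<n. lsmult (c k) (u k)) = 0"
    using lin by (simp add: left_linear_def additive.zero)
  then have zero: "(\<Sum>k<n. lsmult (c k) (monom 1 k)) = 0"
    using u by (simp add: left_linear_sum[OF lin])
  from c(1) obtain j where "j < n" "c j \<noteq> 0" by auto
  moreover have "coeff (\<Sum>k<n. lsmult (c k) (monom 1 k)) j = c j"
    using \<open>j < n\<close> by (simp add: coeff_sum_lsmult_monom)
  ultimately show False using zero by simp
qed

section \<open>The skew polynomial ring\<close>

lemma surj_if_surj_funpow:
  fixes g :: "'a \<Rightarrow> 'a"
  assumes "surj (g ^^ n)" and "0 < n"
  shows "surj g"
proof -
  obtain k where "n = Suc k" using assms(2) gr0_conv_Suc by blast
  then have "(g ^^ n) x = g ((g ^^ k) x)" for x by simp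
  then show ?thesis using assms(1) by (metis surj_def)
qed

locale skew_poly_ring =
  fixes \<sigma> \<delta> :: "'a::division_ring \<Rightarrow> 'a"
  assumes ring_endo: "ring_endo \<sigma>" and derivation: "left_sigma_derivation \<sigma> \<delta>"
begin

abbreviation skew_times :: "'a poly \<Rightarrow> 'a poly \<Rightarrow> 'a poly" (infixl "\<otimes>" 70)
  where "p \<otimes> q \<equiv> skew_mult \<sigma> \<delta> p q"

abbreviation tmul :: "'a poly \<Rightarrow> 'a poly"
  where "tmul \<equiv> skew_tmul \<sigma> \<delta>"

lemma sigma_add: "\<sigma> (a + b) = \<sigma> a + \<sigma> b"
  and sigma_mult: "\<sigma> (a * b) = \<sigma> a * \<sigma> b"
  and sigma_one [simp]: "\<sigma> 1 = 1"
  using ring_endo by (simp_all add: ring_endo_def)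

lemma delta_add: "\<delta> (a + b) = \<delta> a + \<delta> b"
  and delta_mult: "\<delta> (a * b) = \<sigma> a * \<delta> b + \<delta> a * b"
  using derivation by (simp_all add: left_sigma_derivation_def)

lemma sigma_zero [simp]: "\<sigma> 0 = 0"
  using sigma_add[of 0 0] by simp

lemma delta_zero [simp]: "\<delta> 0 = 0"
  using delta_add[of 0 0] by simp

lemma delta_one [simp]: "\<delta> 1 = 0"
  using delta_mult[of 1 1] by simp

lemma sigma_eq_0_iff [simp]: "\<sigma> a = 0 \<longleftrightarrow> a = 0"
proof
  assume "\<sigma> a = 0"
  show "a = 0"
  proof (rule ccontr)
    assume "a \<noteq> 0"
    then have "1 = \<sigma> a * \<sigma> (inverse a)" by (metis sigma_one sigma_mult right_inverse)
    with \<open>\<sigma> a = 0\<close> show False by simp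
  qed
qed simp

lemma funpow_sigma_eq_0_iff [simp]: "(\<sigma> ^^ n) a = 0 \<longleftrightarrow> a = 0"
  by (induction n) auto

lemma funpow_sigma_zero [simp]: "(\<sigma> ^^ n) 0 = 0"
  by simp

lemma coeff_tmul: "coeff (tmul p) i = (if i = 0 then 0 else \<sigma> (coeff p (i - 1))) + \<delta> (coeff p i)"
  by (simp add: skew_tmul_def coeff_pCons' coeff_map_poly)

lemma additive_funpow_tmul: "additive (tmul ^^ n)"
proof (induction n)
  case (Suc n)
  have "additive tmul"
    by unfold_locales (simp add: poly_eq_iff coeff_tmul sigma_add delta_add algebra_simps)
  with Suc show ?case by (simp add: additive_def)
qed (simp add: additive_def)

lemmas tmul_sum = additive.sum[OF additive_funpow_tmul[of 1], simplified]

lemma tmul_lsmult: "tmul (lsmult c p) = lsmult (\<sigma> c) (tmul p) + lsmult (\<delta> c) p"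
  by (rule poly_eqI) (simp add: coeff_tmul coeff_lsmult sigma_mult delta_mult algebra_simps)

lemma skew_mult_eq_sum:
  assumes "degree p \<le> N"
  shows "p \<otimes> q = (\<Sum>i\<le>N. lsmult (coeff p i) ((tmul ^^ i) q))"
  unfolding skew_mult_def
  by (rule sum.mono_neutral_left) (use assms in \<open>auto simp: coeff_eq_0\<close>)

lemma additive_skew_mult_right: "additive (\<lambda>q. p \<otimes> q)"
  by unfold_locales
    (simp add: skew_mult_def additive.add[OF additive_funpow_tmul] lsmult_add_right sum.distrib)

lemma additive_skew_mult_left: "additive (\<lambda>p. p \<otimes> q)"
proof
  fix p1 p2 :: "'a poly"
  let ?N = "max (degree p1) (degree p2)"
  have "degree (p1 + p2) \<le> ?N" by (rule degree_add_le_max)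
  then show "(p1 + p2) \<otimes> q = p1 \<otimes> q + p2 \<otimes> q"
    by (simp add: skew_mult_eq_sum[of _ ?N] lsmult_add_left sum.distrib)
qed

lemmas skew_mult_add_right = additive.add[OF additive_skew_mult_right]
lemmas skew_mult_diff_right = additive.diff[OF additive_skew_mult_right]
lemmas skew_mult_sum_right = additive.sum[OF additive_skew_mult_right]
lemmas skew_mult_0_right [simp] = additive.zero[OF additive_skew_mult_right]
lemmas skew_mult_add_left = additive.add[OF additive_skew_mult_left]
lemmas skew_mult_diff_left = additive.diff[OF additive_skew_mult_left]
lemmas skew_mult_sum_left = additive.sum[OF additive_skew_mult_left]
lemmas skew_mult_0_left [simp] = additive.zero[OF additive_skew_mult_left]

lemma skew_mult_lsmult_left: "lsmult c p \<otimes> q = lsmult c (p \<otimes> q)"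
proof -
  have "lsmult c p \<otimes> q = (\<Sum>i\<le>degree p. lsmult (coeff (lsmult c p) i) ((tmul ^^ i) q))"
    by (rule skew_mult_eq_sum[OF degree_lsmult_le])
  also have "\<dots> = lsmult c (p \<otimes> q)"
    by (simp add: skew_mult_def coeff_lsmult lsmult_lsmult lsmult_sum_right)
  finally show ?thesis .
qed

lemma skew_mult_monom_left: "monom c i \<otimes> q = lsmult c ((tmul ^^ i) q)"
proof -
  have "monom c i \<otimes> q = (\<Sum>j\<le>i. lsmult (coeff (monom c i) j) ((tmul ^^ j) q))"
    by (rule skew_mult_eq_sum[OF degree_monom_le])
  also have "\<dots> = lsmult c ((tmul ^^ i) q)"
    by (subst sum.remove[of _ i]) auto
  finally show ?thesis .
qed

lemma skew_mult_const_left: "[:c:] \<otimes> q = lsmult c q"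
  using skew_mult_monom_left[of c 0 q] by (simp add: monom_0)

lemma degree_tmul_le: "degree (tmul p) \<le> Suc (degree p)"
  by (rule degree_le) (auto simp: coeff_tmul coeff_eq_0)

lemma skew_mult_tmul_left: "tmul p \<otimes> q = tmul (p \<otimes> q)"
proof -
  let ?n = "degree p"
  have "tmul p \<otimes> q = (\<Sum>i\<le>Suc ?n. lsmult (coeff (tmul p) i) ((tmul ^^ i) q))"
    by (rule skew_mult_eq_sum[OF degree_tmul_le])
  also have "\<dots> = (\<Sum>i\<le>Suc ?n. lsmult (if i = 0 then 0 else \<sigma> (coeff p (i - 1))) ((tmul ^^ i) q))
      + (\<Sum>i\<le>Suc ?n. lsmult (\<delta> (coeff p i)) ((tmul ^^ i) q))"
    by (simp add: coeff_tmul lsmult_add_left sum.distrib)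
  also have "(\<Sum>i\<le>Suc ?n. lsmult (if i = 0 then 0 else \<sigma> (coeff p (i - 1))) ((tmul ^^ i) q))
      = (\<Sum>i\<le>?n. lsmult (\<sigma> (coeff p i)) ((tmul ^^ Suc i) q))"
    by (subst sum.atMost_Suc_shift) simp
  also have "(\<Sum>i\<le>Suc ?n. lsmult (\<delta> (coeff p i)) ((tmul ^^ i) q))
      = (\<Sum>i\<le>?n. lsmult (\<delta> (coeff p i)) ((tmul ^^ i) q))"
    by (simp add: coeff_eq_0)
  also have "(\<Sum>i\<le>?n. lsmult (\<sigma> (coeff p i)) ((tmul ^^ Suc i) q))
      + (\<Sum>i\<le>?n. lsmult (\<delta> (coeff p i)) ((tmul ^^ i) q)) = tmul (p \<otimes> q)"
    by (simp add: skew_mult_def tmul_sum tmul_lsmult sum.distrib)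
  finally show ?thesis .
qed

lemma skew_mult_assoc: "(p \<otimes> q) \<otimes> r = p \<otimes> (q \<otimes> r)"
proof -
  have funpow_tmul_left: "(tmul ^^ i) q \<otimes> r = (tmul ^^ i) (q \<otimes> r)" for i
    by (induction i) (simp_all add: skew_mult_tmul_left)
  show ?thesis
    by (simp add: skew_mult_def[of \<sigma> \<delta> p] skew_mult_sum_left skew_mult_lsmult_left funpow_tmul_left)
qed

lemma funpow_tmul_monom_one: "(tmul ^^ i) (monom 1 j) = monom 1 (i + j)"
proof (induction i)
  case (Suc i)
  then show ?case by (intro poly_eqI) (auto simp: coeff_tmul)
qed simp

lemma skew_mult_monom_one: "monom 1 i \<otimes> monom 1 j = monom 1 (i + j)"
  by (simp add: skew_mult_monom_left funpow_tmul_monom_one lsmult_monom)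

lemma skew_mult_one_right [simp]: "p \<otimes> [:1:] = p"
  using funpow_tmul_monom_one[of _ 0]
  by (simp add: skew_mult_def monom_0 lsmult_monom poly_as_sum_of_monoms)

lemma skew_mult_one_left [simp]: "[:1:] \<otimes> p = p"
  by (simp add: skew_mult_const_left)

primrec skew_power :: "'a poly \<Rightarrow> nat \<Rightarrow> 'a poly" where
  "skew_power a 0 = [:1:]"
| "skew_power a (Suc n) = a \<otimes> skew_power a n"

lemma skew_power_Suc_right: "skew_power a (Suc n) = skew_power a n \<otimes> a"
  by (induction n) (simp_all flip: skew_mult_assoc)

lemma skew_mult_const_inverse: "c \<noteq> 0 \<Longrightarrow> [:c:] \<otimes> [:inverse c:] = [:1:]"
  by (rule poly_eqI) (simp add: skew_mult_const_left coeff_lsmult coeff_pCons split: nat.split)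

lemma degree_funpow_tmul_le: "degree ((tmul ^^ n) p) \<le> degree p + n"
proof (induction n)
  case (Suc n)
  then show ?case using degree_tmul_le[of "(tmul ^^ n) p"] by simp
qed simp

lemma coeff_funpow_tmul_top: "coeff ((tmul ^^ n) p) (degree p + n) = (\<sigma> ^^ n) (lead_coeff p)"
proof (induction n)
  case (Suc n)
  have "coeff ((tmul ^^ n) p) (Suc (degree p + n)) = 0"
    using degree_funpow_tmul_le[of n p] by (simp add: coeff_eq_0)
  with Suc show ?case by (simp add: coeff_tmul)
qed simp

lemma degree_skew_mult_le: "degree (p \<otimes> q) \<le> degree p + degree q"
  unfolding skew_mult_def
proof (rule degree_sum_le)
  fix i assume "i \<in> {..degree p}"
  then show "degree (lsmult (coeff p i) ((tmul ^^ i) q)) \<le> degree p + degree q"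
    using degree_lsmult_le[of "coeff p i" "(tmul ^^ i) q"] degree_funpow_tmul_le[of i q] by auto
qed simp

lemma coeff_skew_mult_top:
  "coeff (p \<otimes> q) (degree p + degree q) = lead_coeff p * (\<sigma> ^^ degree p) (lead_coeff q)"
proof -
  have "coeff (p \<otimes> q) (degree p + degree q)
      = (\<Sum>i<Suc (degree p). coeff p i * coeff ((tmul ^^ i) q) (degree p + degree q))"
    by (simp add: skew_mult_def coeff_sum coeff_lsmult lessThan_Suc_atMost)
  also have "\<dots> = lead_coeff p * coeff ((tmul ^^ degree p) q) (degree p + degree q)"
  proof -
    have "coeff ((tmul ^^ i) q) (degree p + degree q) = 0" if "i < degree p" for i
      using degree_funpow_tmul_le[of i q] that by (intro coeff_eq_0) simp
    then show ?thesis by simp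
  qed
  also have "\<dots> = lead_coeff p * (\<sigma> ^^ degree p) (lead_coeff q)"
    using coeff_funpow_tmul_top[of "degree p" q] by (simp add: add.commute)
  finally show ?thesis .
qed

lemma degree_skew_mult:
  assumes "p \<noteq> 0" and "q \<noteq> 0"
  shows "degree (p \<otimes> q) = degree p + degree q"
proof -
  have "coeff (p \<otimes> q) (degree p + degree q) \<noteq> 0"
    using assms by (simp add: coeff_skew_mult_top)
  then show ?thesis using le_degree degree_skew_mult_le le_antisym by blast
qed

lemma lead_coeff_skew_mult: "lead_coeff (p \<otimes> q) = lead_coeff p * (\<sigma> ^^ degree p) (lead_coeff q)"
  by (cases "p = 0 \<or> q = 0") (auto simp: degree_skew_mult coeff_skew_mult_top)

lemma skew_mult_eq_0_iff [simp]: "p \<otimes> q = 0 \<longleftrightarrow> p = 0 \<or> q = 0"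
  using lead_coeff_skew_mult[of p q] by auto

lemma right_division:
  assumes "h \<noteq> 0"
  shows "\<exists>q r. g = q \<otimes> h + r \<and> r \<in> polys_below (degree h)"
proof (induction "degree g" arbitrary: g rule: less_induct)
  case less
  show ?case
  proof (cases "g \<in> polys_below (degree h)")
    case True
    then show ?thesis by (intro exI[of _ 0] exI[of _ g]) simp
  next
    case False
    then have "g \<noteq> 0" and "degree h \<le> degree g" by (auto simp: mem_polys_below_iff)
    define k where "k = degree g - degree h"
    define b where "b = lead_coeff g * inverse ((\<sigma> ^^ k) (lead_coeff h))"
    have "b \<noteq> 0" using \<open>g \<noteq> 0\<close> assms by (simp add: b_def)
    let ?s = "monom b k \<otimes> h"
    have "degree ?s = degree g"
      using \<open>b \<noteq> 0\<close> assms \<open>degree h \<le> degree g\<close> by (simp add: degree_skew_mult degree_monom_eq k_def)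
    moreover have "lead_coeff ?s = lead_coeff g"
      using \<open>b \<noteq> 0\<close> assms by (simp add: lead_coeff_skew_mult degree_monom_eq b_def mult.assoc)
    ultimately have "g - ?s \<in> polys_below (degree g)"
      by (intro diff_mem_polys_below_if_same_lead_coeff) simp_all
    then consider "g - ?s = 0" | "degree (g - ?s) < degree g" by (auto simp: mem_polys_below_iff)
    then show ?thesis
    proof cases
      case 1
      then have "g = monom b k \<otimes> h + 0" by simp
      then show ?thesis using zero_mem_polys_below by blast
    next
      case 2
      from less[OF this] obtain q r where "g - ?s = q \<otimes> h + r" "r \<in> polys_below (degree h)"
        by blast
      then have "g = (q + monom b k) \<otimes> h + r" by (simp add: skew_mult_add_left algebra_simps)
      with \<open>r \<in> polys_below (degree h)\<close> show ?thesis by blast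
    qed
  qed
qed

lemma left_division:
  assumes "surj \<sigma>" and "h \<noteq> 0"
  shows "\<exists>q r. g = h \<otimes> q + r \<and> r \<in> polys_below (degree h)"
proof (induction "degree g" arbitrary: g rule: less_induct)
  case less
  show ?case
  proof (cases "g \<in> polys_below (degree h)")
    case True
    then show ?thesis by (intro exI[of _ 0] exI[of _ g]) simp
  next
    case False
    then have "g \<noteq> 0" and "degree h \<le> degree g" by (auto simp: mem_polys_below_iff)
    define k where "k = degree g - degree h"
    obtain b where b: "(\<sigma> ^^ degree h) b = inverse (lead_coeff h) * lead_coeff g"
      using surj_fn[OF assms(1)] by (metis surjD)
    have "b \<noteq> 0" using b \<open>g \<noteq> 0\<close> assms(2) by auto
    let ?s = "h \<otimes> monom b k"
    have "degree ?s = degree g"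
      using \<open>b \<noteq> 0\<close> assms(2) \<open>degree h \<le> degree g\<close> by (simp add: degree_skew_mult degree_monom_eq k_def)
    moreover have "lead_coeff ?s = lead_coeff g"
      using \<open>b \<noteq> 0\<close> assms(2) b by (simp add: lead_coeff_skew_mult degree_monom_eq mult.assoc[symmetric])
    ultimately have "g - ?s \<in> polys_below (degree g)"
      by (intro diff_mem_polys_below_if_same_lead_coeff) simp_all
    then consider "g - ?s = 0" | "degree (g - ?s) < degree g" by (auto simp: mem_polys_below_iff)
    then show ?thesis
    proof cases
      case 1
      then have "g = h \<otimes> monom b k + 0" by simp
      then show ?thesis using zero_mem_polys_below by blast
    next
      case 2
      from less[OF this] obtain q r where "g - ?s = h \<otimes> q + r" "r \<in> polys_below (degree h)"
        by blast
      then have "g = h \<otimes> (q + monom b k) + r" by (simp add: skew_mult_add_right algebra_simps)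
      with \<open>r \<in> polys_below (degree h)\<close> show ?thesis by blast
    qed
  qed
qed

definition left_ideal :: "'a poly set \<Rightarrow> bool" where
  "left_ideal I \<longleftrightarrow> (\<forall>x\<in>I. \<forall>y\<in>I. x - y \<in> I) \<and> (\<forall>x\<in>I. \<forall>r. r \<otimes> x \<in> I)"

definition right_ideal :: "'a poly set \<Rightarrow> bool" where
  "right_ideal I \<longleftrightarrow> (\<forall>x\<in>I. \<forall>y\<in>I. x - y \<in> I) \<and> (\<forall>x\<in>I. \<forall>r. x \<otimes> r \<in> I)"

lemma left_ideal_left_combinations: "left_ideal {p \<otimes> a + q \<otimes> b | p q. True}"
  unfolding left_ideal_def
proof (intro conjI ballI allI)
  fix x y r assume "x \<in> {p \<otimes> a + q \<otimes> b | p q. True}" "y \<in> {p \<otimes> a + q \<otimes> b | p q. True}"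
  then obtain p1 q1 p2 q2 where "x = p1 \<otimes> a + q1 \<otimes> b" "y = p2 \<otimes> a + q2 \<otimes> b" by blast
  then have "x - y = (p1 - p2) \<otimes> a + (q1 - q2) \<otimes> b"
    and "r \<otimes> x = (r \<otimes> p1) \<otimes> a + (r \<otimes> q1) \<otimes> b"
    by (simp_all add: skew_mult_diff_left skew_mult_add_right skew_mult_assoc)
  then show "x - y \<in> {p \<otimes> a + q \<otimes> b | p q. True}" and "r \<otimes> x \<in> {p \<otimes> a + q \<otimes> b | p q. True}"
    by blast+
qed

lemma right_ideal_right_combinations: "right_ideal {a \<otimes> p + b \<otimes> q | p q. True}"
  unfolding right_ideal_def
proof (intro conjI ballI allI)
  fix x y r assume "x \<in> {a \<otimes> p + b \<otimes> q | p q. True}" "y \<in> {a \<otimes> p + b \<otimes> q | p q. True}"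
  then obtain p1 q1 p2 q2 where "x = a \<otimes> p1 + b \<otimes> q1" "y = a \<otimes> p2 + b \<otimes> q2" by blast
  then have "x - y = a \<otimes> (p1 - p2) + b \<otimes> (q1 - q2)"
    and "x \<otimes> r = a \<otimes> (p1 \<otimes> r) + b \<otimes> (q1 \<otimes> r)"
    by (simp_all add: skew_mult_diff_right skew_mult_add_left skew_mult_assoc)
  then show "x - y \<in> {a \<otimes> p + b \<otimes> q | p q. True}" and "x \<otimes> r \<in> {a \<otimes> p + b \<otimes> q | p q. True}"
    by blast+
qed

lemma left_ideal_eq_left_ideal_gen:
  assumes I: "left_ideal I" and h: "h \<in> I" "h \<noteq> 0"
    and min: "\<And>x. x \<in> I \<Longrightarrow> x \<noteq> 0 \<Longrightarrow> degree h \<le> degree x"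
  shows "I = skew_left_ideal_gen \<sigma> \<delta> h"
proof
  show "I \<subseteq> skew_left_ideal_gen \<sigma> \<delta> h"
  proof
    fix x assume "x \<in> I"
    obtain q r where qr: "x = q \<otimes> h + r" "r \<in> polys_below (degree h)"
      using right_division[OF h(2)] by blast
    have "r = x - q \<otimes> h" using qr(1) by simp
    then have "r \<in> I" using I \<open>x \<in> I\<close> h(1) by (simp add: left_ideal_def)
    then have "r = 0" using qr(2) min by (force simp: mem_polys_below_iff)
    with qr(1) show "x \<in> skew_left_ideal_gen \<sigma> \<delta> h" by (auto simp: skew_left_ideal_gen_def)
  qed
  show "skew_left_ideal_gen \<sigma> \<delta> h \<subseteq> I"
    using I h(1) by (auto simp: left_ideal_def skew_left_ideal_gen_def)
qed

lemma right_ideal_eq_right_ideal_gen: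
  assumes "surj \<sigma>" and I: "right_ideal I" and h: "h \<in> I" "h \<noteq> 0"
    and min: "\<And>x. x \<in> I \<Longrightarrow> x \<noteq> 0 \<Longrightarrow> degree h \<le> degree x"
  shows "I = skew_right_ideal_gen \<sigma> \<delta> h"
proof
  show "I \<subseteq> skew_right_ideal_gen \<sigma> \<delta> h"
  proof
    fix x assume "x \<in> I"
    obtain q r where qr: "x = h \<otimes> q + r" "r \<in> polys_below (degree h)"
      using left_division[OF assms(1) h(2)] by blast
    have "r = x - h \<otimes> q" using qr(1) by simp
    then have "r \<in> I" using I \<open>x \<in> I\<close> h(1) by (simp add: right_ideal_def)
    then have "r = 0" using qr(2) min by (force simp: mem_polys_below_iff)
    with qr(1) show "x \<in> skew_right_ideal_gen \<sigma> \<delta> h" by (auto simp: skew_right_ideal_gen_def)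
  qed
  show "skew_right_ideal_gen \<sigma> \<delta> h \<subseteq> I"
    using I h(1) by (auto simp: right_ideal_def skew_right_ideal_gen_def)
qed

text \<open>A descending chain of right ideals sharing a nonzero element becomes stationary:
  the degrees of minimal generators increase and are bounded by the degree of that element.\<close>

lemma right_ideal_chain_stabilizes:
  assumes "surj \<sigma>" and ideal: "\<And>n. right_ideal (J n)" and desc: "\<And>n. J (Suc n) \<subseteq> J n"
    and c: "\<And>n. c \<in> J n" "c \<noteq> 0"
  shows "\<exists>n. J (Suc n) = J n"
proof -
  have "\<exists>g. g \<in> J n \<and> g \<noteq> 0 \<and> (\<forall>x\<in>J n. x \<noteq> 0 \<longrightarrow> degree g \<le> degree x)" for n
    using exists_min_degree[OF c(1)[of n] c(2)] by metis
  then obtain g where g: "\<And>n. g n \<in> J n" "\<And>n. g n \<noteq> 0"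
    and min: "\<And>n x. x \<in> J n \<Longrightarrow> x \<noteq> 0 \<Longrightarrow> degree (g n) \<le> degree x"
    by metis
  have gen: "J n = skew_right_ideal_gen \<sigma> \<delta> (g n)" for n
    by (rule right_ideal_eq_right_ideal_gen[OF assms(1) ideal g(1,2) min])
  have "\<exists>n. degree (g (Suc n)) \<le> degree (g n)"
  proof (rule ccontr)
    assume "\<not> ?thesis"
    then have "degree (g n) < degree (g (Suc n))" for n by (simp add: not_le)
    then have "n \<le> degree (g n)" for n
      by (induction n) (auto intro: le_less_trans simp: Suc_le_eq)
    moreover have "degree (g n) \<le> degree c" for n using min c by blast
    ultimately show False using Suc_n_not_le_n order_trans by blast
  qed
  then obtain n where le: "degree (g (Suc n)) \<le> degree (g n)" by blast
  have "g (Suc n) \<in> J n" using g(1) desc by blast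
  then obtain u where u: "g (Suc n) = g n \<otimes> u"
    by (auto simp: gen[of n] skew_right_ideal_gen_def)
  then have "u \<noteq> 0" using g(2) by auto
  with u le g(2) have "degree u = 0" by (simp add: degree_skew_mult)
  then obtain e where e: "u = [:e:]" "e \<noteq> 0" using \<open>u \<noteq> 0\<close> by (metis degree_eq_zeroE pCons_eq_0_iff)
  have "g n = g (Suc n) \<otimes> [:inverse e:]"
    using u e by (simp add: skew_mult_assoc skew_mult_const_inverse)
  then have "g n \<in> J (Suc n)" using ideal g(1) by (simp add: right_ideal_def)
  then have "J n \<subseteq> J (Suc n)"
    using ideal by (auto simp: gen[of n] skew_right_ideal_gen_def right_ideal_def)
  with desc show ?thesis by blast
qed

lemma surj_funpow_sigma_if_const_invariant:
  assumes "p \<noteq> 0" and inv: "\<And>d. \<exists>w. [:d:] \<otimes> p = p \<otimes> w"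
  shows "surj (\<sigma> ^^ degree p)"
  unfolding surj_def
proof
  fix e
  show "\<exists>b. e = (\<sigma> ^^ degree p) b"
  proof (cases "e = 0")
    case False
    define d where "d = lead_coeff p * e * inverse (lead_coeff p)"
    obtain w where w: "lsmult d p = p \<otimes> w" using inv[of d] by (auto simp: skew_mult_const_left)
    have "d \<noteq> 0" using False assms(1) by (simp add: d_def)
    have "lead_coeff p * (\<sigma> ^^ degree p) (lead_coeff w) = lead_coeff (lsmult d p)"
      by (simp add: w lead_coeff_skew_mult)
    also have "\<dots> = lead_coeff p * e"
      using \<open>d \<noteq> 0\<close> assms(1) by (simp add: lead_coeff_lsmult d_def mult.assoc)
    finally show ?thesis using assms(1) by auto
  qed simp
qed

lemma exists_right_coeffs:
  assumes "surj \<sigma>" and "r \<in> polys_below n"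
  shows "\<exists>e. r = (\<Sum>j<n. monom 1 j \<otimes> [:e j:])"
  using assms(2)
proof (induction n arbitrary: r)
  case 0
  then have "r = 0" by (simp add: polys_below_def poly_eq_iff)
  then show ?case by simp
next
  case (Suc n)
  obtain a where a: "(\<sigma> ^^ n) a = coeff r n"
    using surj_fn[OF assms(1)] by (metis surjD)
  define s where "s = monom 1 n \<otimes> [:a:]"
  have "s = (tmul ^^ n) [:a:]" by (simp add: s_def skew_mult_monom_left)
  then have "coeff s n = coeff r n" and "degree s \<le> n"
    using coeff_funpow_tmul_top[of n "[:a:]"] degree_funpow_tmul_le[of n "[:a:]"] a by simp_all
  have "r - s \<in> polys_below n"
    unfolding polys_below_def
  proof (intro CollectI allI impI)
    fix i assume "n \<le> i"
    show "coeff (r - s) i = 0"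
    proof (cases "i = n")
      case False
      then have "Suc n \<le> i" using \<open>n \<le> i\<close> by simp
      then show ?thesis using Suc.prems \<open>degree s \<le> n\<close> by (simp add: polys_below_def coeff_eq_0)
    qed (simp add: \<open>coeff s n = coeff r n\<close>)
  qed
  then obtain e where e: "r - s = (\<Sum>j<n. monom 1 j \<otimes> [:e j:])" using Suc.IH by blast
  have "r = (\<Sum>j<Suc n. monom 1 j \<otimes> [:(e(n := a)) j:])"
    using e by (simp add: s_def algebra_simps)
  then show ?case by blast
qed

end

section \<open>Remainders modulo \<open>f\<close> and the annihilator of \<open>R/Rf\<close>\<close>

locale skew_poly_mod = skew_poly_ring +
  fixes f :: "'a poly"
  assumes degree_f_pos: "0 < degree f"
begin

abbreviation rmod :: "'a poly \<Rightarrow> 'a poly"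
  where "rmod g \<equiv> skew_rmod \<sigma> \<delta> g f"

lemma f_nonzero: "f \<noteq> 0"
  using degree_f_pos by auto

lemma Sf_carrier_eq: "Sf_carrier f = polys_below (degree f)"
  by (simp add: Sf_carrier_def polys_below_eq degree_f_pos)

lemma right_remainder_unique:
  assumes "q1 \<otimes> f + r1 = q2 \<otimes> f + r2" and "degree r1 < degree f" and "degree r2 < degree f"
  shows "r1 = r2"
proof (rule ccontr)
  assume "r1 \<noteq> r2"
  have eq: "(q1 - q2) \<otimes> f = r2 - r1"
    using assms(1) by (simp add: skew_mult_diff_left algebra_simps)
  with \<open>r1 \<noteq> r2\<close> have "q1 - q2 \<noteq> 0" by auto
  then have "degree f \<le> degree (r2 - r1)"
    using f_nonzero by (simp flip: eq add: degree_skew_mult)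
  moreover have "degree (r2 - r1) < degree f"
    using assms(2,3) by (intro degree_diff_less)
  ultimately show False by simp
qed

lemma rmod_eqI:
  assumes "g = q \<otimes> f + r" and "degree r < degree f"
  shows "rmod g = r"
  unfolding skew_rmod_def
proof (rule the_equality)
  show "degree r < degree f \<and> (\<exists>q. g = q \<otimes> f + r)" using assms by blast
next
  fix r' assume "degree r' < degree f \<and> (\<exists>q. g = q \<otimes> f + r')"
  then obtain q' where "g = q' \<otimes> f + r'" and "degree r' < degree f" by blast
  then show "r' = r" using right_remainder_unique[of q' r' q r] assms by simp
qed

lemma rmod_decomp: "degree (rmod g) < degree f \<and> (\<exists>q. g = q \<otimes> f + rmod g)"
proof -
  obtain q r where qr: "g = q \<otimes> f + r" "r \<in> polys_below (degree f)"
    using right_division[OF f_nonzero] by blast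
  then have "degree r < degree f" using degree_f_pos by (simp add: polys_below_eq)
  moreover from qr(1) this have "rmod g = r" by (rule rmod_eqI)
  ultimately show ?thesis using qr(1) by blast
qed

lemma rmod_mem_polys_below: "rmod g \<in> polys_below (degree f)"
  using rmod_decomp degree_f_pos by (simp add: polys_below_eq)

lemma rmod_eq_self: "g \<in> polys_below (degree f) \<Longrightarrow> rmod g = g"
  using rmod_eqI[of g 0 g] degree_f_pos by (simp add: polys_below_eq)

lemma rmod_multiple [simp]: "rmod (q \<otimes> f) = 0"
  using rmod_eqI[of "q \<otimes> f" q 0] degree_f_pos by simp

lemma additive_rmod: "additive rmod"
proof
  fix x y :: "'a poly"
  obtain qx qy where "x = qx \<otimes> f + rmod x" "y = qy \<otimes> f + rmod y"
    using rmod_decomp by metis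
  then have "x + y = (qx + qy) \<otimes> f + (rmod x + rmod y)"
    by (simp add: skew_mult_add_left algebra_simps)
  then show "rmod (x + y) = rmod x + rmod y"
    by (rule rmod_eqI) (simp add: rmod_decomp degree_add_less)
qed

lemmas rmod_add = additive.add[OF additive_rmod]
lemmas rmod_diff = additive.diff[OF additive_rmod]
lemmas rmod_sum = additive.sum[OF additive_rmod]

lemma rmod_lsmult: "rmod (lsmult c x) = lsmult c (rmod x)"
proof -
  obtain q where "x = q \<otimes> f + rmod x" using rmod_decomp by metis
  then have "lsmult c x = lsmult c q \<otimes> f + lsmult c (rmod x)"
    by (metis lsmult_add_right skew_mult_lsmult_left)
  then show ?thesis
    using degree_lsmult_le[of c "rmod x"] rmod_decomp[of x] by (intro rmod_eqI) simp_all
qed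

lemma rmod_eq_0_iff: "rmod x = 0 \<longleftrightarrow> x \<in> skew_left_ideal_gen \<sigma> \<delta> f"
  using rmod_decomp[of x] by (auto simp: skew_left_ideal_gen_def)

lemma rmod_skew_mult_eq_0: "rmod x = 0 \<Longrightarrow> rmod (r \<otimes> x) = 0"
  by (auto simp: rmod_eq_0_iff skew_left_ideal_gen_def simp flip: skew_mult_assoc)

lemma rmod_skew_mult_rmod: "rmod (x \<otimes> rmod y) = rmod (x \<otimes> y)"
proof -
  obtain q where "y = q \<otimes> f + rmod y" using rmod_decomp by metis
  then have "x \<otimes> y = (x \<otimes> q) \<otimes> f + x \<otimes> rmod y"
    by (metis skew_mult_add_right skew_mult_assoc)
  then show ?thesis by (simp add: rmod_add)
qed

lemma left_linear_rmod_mult_right: "left_linear (\<lambda>x. rmod (x \<otimes> a))"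
  unfolding left_linear_def
  by (simp add: additive_def skew_mult_add_left rmod_add skew_mult_lsmult_left rmod_lsmult)

lemma monom_mem_image_rmod_mult_right:
  assumes bezout: "P \<otimes> z + Q \<otimes> f = [:1:]" and "h \<noteq> 0" and "rmod (h \<otimes> z) = 0"
    and "i < degree f"
  shows "monom 1 i \<in> (\<lambda>w. rmod (w \<otimes> z)) ` polys_below (degree h)"
proof -
  obtain W r where Wr: "monom 1 i \<otimes> P = W \<otimes> h + r" "r \<in> polys_below (degree h)"
    using right_division[OF assms(2)] by blast
  have "r \<otimes> z = monom 1 i - (monom 1 i \<otimes> Q) \<otimes> f - W \<otimes> (h \<otimes> z)"
  proof -
    have "r = monom 1 i \<otimes> P - W \<otimes> h" using Wr(1) by simp
    then have "r \<otimes> z = monom 1 i \<otimes> (P \<otimes> z) - W \<otimes> (h \<otimes> z)"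
      by (simp add: skew_mult_diff_left skew_mult_assoc)
    also have "P \<otimes> z = [:1:] - Q \<otimes> f" using bezout by (simp add: algebra_simps)
    finally show ?thesis by (simp add: skew_mult_diff_right skew_mult_assoc)
  qed
  moreover have "rmod (W \<otimes> (h \<otimes> z)) = 0"
    using assms(3) by (rule rmod_skew_mult_eq_0)
  moreover have "rmod (monom 1 i) = monom 1 i"
    using assms(4) by (simp add: rmod_eq_self polys_below_eq degree_f_pos degree_monom_eq)
  ultimately have "monom 1 i = rmod (r \<otimes> z)" by (simp add: rmod_diff)
  with Wr(2) show ?thesis by (rule rev_image_eqI)
qed

text \<open>In \<open>S\<^sub>f\<close> one has \<open>t\<^sup>m\<^sup>-\<^sup>1 \<circ> t = t\<^sup>m - f\<close>, so associativity of the triple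
  \<open>(t\<^sup>m\<^sup>-\<^sup>1, t, d)\<close> says exactly that \<open>f d \<in> R f\<close>.\<close>

lemma rmod_f_mult_const_eq_0_if_nucleus:
  assumes monic: "lead_coeff f = 1" and "2 \<le> degree f"
    and nuc: "[:d:] \<in> Sf_nuc_r \<sigma> \<delta> f"
  shows "rmod (f \<otimes> [:d:]) = 0"
proof -
  let ?y = "monom (1::'a) (degree f - 1)" and ?z = "monom (1::'a) 1" and ?t = "monom (1::'a) (degree f)"
  have "?y \<in> Sf_carrier f" and "?z \<in> Sf_carrier f"
    using \<open>2 \<le> degree f\<close> by (simp_all add: Sf_carrier_def degree_monom_eq)
  with nuc have assoc: "Sf_mult \<sigma> \<delta> f (Sf_mult \<sigma> \<delta> f ?y ?z) [:d:]
      = Sf_mult \<sigma> \<delta> f ?y (Sf_mult \<sigma> \<delta> f ?z [:d:])"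
    by (auto simp: Sf_nuc_r_def)
  have yz: "?y \<otimes> ?z = ?t" using \<open>2 \<le> degree f\<close> by (simp add: skew_mult_monom_one)
  have "?t - f \<in> polys_below (degree f)"
    using monic by (intro diff_mem_polys_below_if_same_lead_coeff) (simp_all add: degree_monom_eq)
  then have "rmod ?t = ?t - f"
    by (intro rmod_eqI[of _ "[:1:]"]) (simp_all add: polys_below_eq degree_f_pos)
  then have "Sf_mult \<sigma> \<delta> f (Sf_mult \<sigma> \<delta> f ?y ?z) [:d:] = rmod (?t \<otimes> [:d:]) - rmod (f \<otimes> [:d:])"
    unfolding Sf_mult_def yz by (simp add: skew_mult_diff_left rmod_diff)
  moreover have "Sf_mult \<sigma> \<delta> f ?y (Sf_mult \<sigma> \<delta> f ?z [:d:]) = rmod (?t \<otimes> [:d:])"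
  proof -
    have "degree (?z \<otimes> [:d:]) < degree f"
      using degree_skew_mult_le[of ?z "[:d:]"] degree_monom_le[of "1::'a" 1] \<open>2 \<le> degree f\<close> by simp
    then have rz: "rmod (?z \<otimes> [:d:]) = ?z \<otimes> [:d:]"
      by (simp add: rmod_eq_self polys_below_eq degree_f_pos)
    show ?thesis unfolding Sf_mult_def rz skew_mult_assoc[symmetric] yz by (rule refl)
  qed
  ultimately show ?thesis using assoc by simp
qed

definition annihilator :: "'a poly set" where
  "annihilator = {x. \<forall>r. rmod (x \<otimes> r) = 0}"

lemma left_ideal_annihilator: "left_ideal annihilator"
  by (simp add: left_ideal_def annihilator_def skew_mult_diff_left rmod_diff skew_mult_assoc
      rmod_skew_mult_eq_0)

lemma right_ideal_annihilator: "right_ideal annihilator"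
  by (simp add: right_ideal_def annihilator_def skew_mult_diff_left rmod_diff skew_mult_assoc)

lemma annihilator_subset: "annihilator \<subseteq> skew_left_ideal_gen \<sigma> \<delta> f"
proof
  fix x assume "x \<in> annihilator"
  then have "rmod (x \<otimes> [:1:]) = 0" by (simp only: annihilator_def mem_Collect_eq)
  then show "x \<in> skew_left_ideal_gen \<sigma> \<delta> f" by (simp add: rmod_eq_0_iff)
qed

lemma two_sided_ideal_subset_annihilator:
  assumes "skew_two_sided_ideal \<sigma> \<delta> I" and "I \<subseteq> skew_left_ideal_gen \<sigma> \<delta> f"
  shows "I \<subseteq> annihilator"
  using assms by (auto simp: annihilator_def skew_two_sided_ideal_def rmod_eq_0_iff)

text \<open>The \<open>m\<^sup>2\<close> coefficients of the remainders of \<open>x t\<^sup>j\<close> (\<open>j < m\<close>), indexed by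
  \<open>l = j m + i\<close>, depend left linearly on the \<open>m\<^sup>2 + 1\<close> coefficients of
  \<open>x = \<Sum>\<^sub>k c\<^sub>k t\<^sup>k\<close>, \<open>k \<le> m\<^sup>2\<close>.\<close>

lemma exists_nonzero_annihilating_monoms:
  "\<exists>x. x \<noteq> 0 \<and> (\<forall>j<degree f. rmod (x \<otimes> monom 1 j) = 0)"
proof -
  let ?m = "degree f"
  define v where "v k l = (if l < ?m * ?m then coeff (rmod (monom 1 (k + l div ?m))) (l mod ?m) else 0)"
    for k l
  obtain c where c: "\<exists>k\<in>{..?m*?m}. c k \<noteq> 0" "\<forall>l. (\<Sum>k\<in>{..?m*?m}. c k * v k l) = 0"
    using exists_left_dependence[of "{..?m*?m}" "?m*?m" v] by (auto simp: v_def)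
  define x where "x = (\<Sum>k\<in>{..?m*?m}. lsmult (c k) (monom 1 k))"
  have "x \<noteq> 0"
  proof
    assume "x = 0"
    from c(1) obtain k where "k \<in> {..?m*?m}" "c k \<noteq> 0" by blast
    moreover have "coeff x k = c k" using \<open>k \<in> {..?m*?m}\<close> by (simp add: x_def coeff_sum_lsmult_monom)
    ultimately show False using \<open>x = 0\<close> by simp
  qed
  moreover have "rmod (x \<otimes> monom 1 j) = 0" if "j < ?m" for j
  proof (rule poly_eqI)
    fix i
    have "rmod (x \<otimes> monom 1 j) = (\<Sum>k\<in>{..?m*?m}. lsmult (c k) (rmod (monom 1 (k + j))))"
      by (simp add: x_def skew_mult_sum_left skew_mult_lsmult_left skew_mult_monom_one rmod_sum
          rmod_lsmult)
    moreover have "j * ?m + i < ?m * ?m" if "i < ?m"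
    proof -
      have "j * ?m + i < Suc j * ?m" using that by simp
      also have "\<dots> \<le> ?m * ?m" using \<open>j < ?m\<close> by (intro mult_le_mono1) simp
      finally show ?thesis .
    qed
    ultimately have "i < ?m \<Longrightarrow> coeff (rmod (x \<otimes> monom 1 j)) i = (\<Sum>k\<in>{..?m*?m}. c k * v k (j * ?m + i))"
      by (simp add: coeff_sum coeff_lsmult v_def)
    then show "coeff (rmod (x \<otimes> monom 1 j)) i = coeff 0 i"
      using c(2) rmod_decomp[of "x \<otimes> monom 1 j"] by (cases "i < ?m") (simp_all add: coeff_eq_0)
  qed
  ultimately show ?thesis by blast
qed

lemma mem_annihilatorI:
  assumes "surj \<sigma>" and f_const: "\<And>d. rmod (f \<otimes> [:d:]) = 0"
    and x_monoms: "\<And>j. j < degree f \<Longrightarrow> rmod (x \<otimes> monom 1 j) = 0"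
  shows "x \<in> annihilator"
  unfolding annihilator_def
proof (intro CollectI allI)
  fix r
  obtain e where e: "rmod r = (\<Sum>j<degree f. monom 1 j \<otimes> [:e j:])"
    using exists_right_coeffs[OF assms(1) rmod_mem_polys_below] by blast
  have "rmod ((x \<otimes> monom 1 j) \<otimes> [:e j:]) = 0" if j: "j < degree f" for j
  proof -
    obtain q where "x \<otimes> monom 1 j = q \<otimes> f"
      using x_monoms[OF j] by (auto simp: rmod_eq_0_iff skew_left_ideal_gen_def)
    then show ?thesis using f_const rmod_skew_mult_eq_0 by (simp add: skew_mult_assoc)
  qed
  then have "rmod (x \<otimes> rmod r) = 0"
    by (simp add: e skew_mult_sum_right rmod_sum flip: skew_mult_assoc)
  then show "rmod (x \<otimes> r) = 0" by (simp add: rmod_skew_mult_rmod)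
qed

lemma bounded_if_const_invariant:
  assumes "surj \<sigma>" and "\<And>d. rmod (f \<otimes> [:d:]) = 0"
  shows "skew_bounded \<sigma> \<delta> f"
proof -
  obtain x where "x \<in> annihilator" "x \<noteq> 0"
    using exists_nonzero_annihilating_monoms mem_annihilatorI[OF assms] by blast
  then obtain g where g: "g \<in> annihilator" "g \<noteq> 0"
    and min: "\<And>x. x \<in> annihilator \<Longrightarrow> x \<noteq> 0 \<Longrightarrow> degree g \<le> degree x"
    by (rule exists_min_degree) blast
  have "skew_left_ideal_gen \<sigma> \<delta> g = annihilator"
    using left_ideal_eq_left_ideal_gen[OF left_ideal_annihilator g min] by simp
  moreover have "skew_right_ideal_gen \<sigma> \<delta> g = annihilator"
    using right_ideal_eq_right_ideal_gen[OF assms(1) right_ideal_annihilator g min] by simp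
  ultimately show ?thesis
    using g(2) annihilator_subset two_sided_ideal_subset_annihilator
    unfolding skew_bounded_def by metis
qed

lemma surj_if_bounded:
  assumes "skew_bounded \<sigma> \<delta> f"
  shows "surj \<sigma>"
proof -
  obtain fs where fs: "fs \<noteq> 0" "skew_left_ideal_gen \<sigma> \<delta> fs = skew_right_ideal_gen \<sigma> \<delta> fs"
    "skew_left_ideal_gen \<sigma> \<delta> fs \<subseteq> skew_left_ideal_gen \<sigma> \<delta> f"
    using assms by (auto simp: skew_bounded_def)
  have "fs \<in> skew_left_ideal_gen \<sigma> \<delta> fs"
    unfolding skew_left_ideal_gen_def by (rule CollectI, rule exI[of _ "[:1:]"]) simp
  then obtain q where "fs = q \<otimes> f" using fs(3) by (auto simp: skew_left_ideal_gen_def)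
  then have "0 < degree fs" using fs(1) f_nonzero degree_f_pos by (simp add: degree_skew_mult)
  moreover have "\<exists>w. [:d:] \<otimes> fs = fs \<otimes> w" for d
    using fs(2) by (auto simp: skew_left_ideal_gen_def skew_right_ideal_gen_def)
  ultimately show ?thesis
    using surj_funpow_sigma_if_const_invariant[OF fs(1)] surj_if_surj_funpow by blast
qed

end

section \<open>Irreducible \<open>f\<close>: cancellation and division in \<open>S\<^sub>f\<close>\<close>

locale skew_poly_irreducible = skew_poly_mod +
  assumes irreducible: "skew_irreducible \<sigma> \<delta> f"
begin

text \<open>\<open>Rz + Rf\<close> is principal, and irreducibility of \<open>f\<close> forces its generator to be a unit.\<close>

lemma exists_bezout:
  assumes "z \<noteq> 0" and "degree z < degree f"
  shows "\<exists>p q. p \<otimes> z + q \<otimes> f = [:1:]"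
proof -
  define I where "I = {p \<otimes> z + q \<otimes> f | p q. True}"
  have "left_ideal I"
    unfolding I_def by (rule left_ideal_left_combinations)
  have "z \<in> I"
    unfolding I_def by (rule CollectI, rule exI[of _ "[:1:]"], rule exI[of _ 0]) simp
  have "f \<in> I"
    unfolding I_def by (rule CollectI, rule exI[of _ 0], rule exI[of _ "[:1:]"]) simp
  obtain h where h: "h \<in> I" "h \<noteq> 0" and min: "\<And>x. x \<in> I \<Longrightarrow> x \<noteq> 0 \<Longrightarrow> degree h \<le> degree x"
    by (rule exists_min_degree[OF \<open>z \<in> I\<close> assms(1)]) blast
  obtain u where u: "f = u \<otimes> h"
    using left_ideal_eq_left_ideal_gen[OF \<open>left_ideal I\<close> h min] \<open>f \<in> I\<close>
    by (auto simp: skew_left_ideal_gen_def)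
  have "degree h < degree f" using min[OF \<open>z \<in> I\<close> assms(1)] assms(2) by simp
  then have "\<not> degree u < degree f" using irreducible u by (auto simp: skew_irreducible_def)
  moreover have "degree f = degree u + degree h" using u f_nonzero h(2) by (simp add: degree_skew_mult)
  ultimately have "degree h = 0" by simp
  then obtain c where "h = [:c:]" by (rule degree_eq_zeroE)
  with h(2) have "h = [:c:]" "c \<noteq> 0" by simp_all
  then have "[:1:] = [:inverse c:] \<otimes> h"
    using skew_mult_const_inverse[of "inverse c"] by simp
  then have "[:1:] \<in> I" using \<open>left_ideal I\<close> h(1) by (simp add: left_ideal_def)
  then obtain p q where "[:1:] = p \<otimes> z + q \<otimes> f" by (auto simp: I_def)
  then show ?thesis by (intro exI[of _ p] exI[of _ q]) simp
qed

lemma rmod_skew_mult_neq_0: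
  assumes y: "y \<in> polys_below (degree f)" "y \<noteq> 0"
    and z: "z \<in> polys_below (degree f)" "z \<noteq> 0"
  shows "rmod (y \<otimes> z) \<noteq> 0"
proof
  assume yz: "rmod (y \<otimes> z) = 0"
  have "degree z < degree f" using z degree_f_pos by (simp add: polys_below_eq)
  with z(2) obtain P Q where "P \<otimes> z + Q \<otimes> f = [:1:]"
    using exists_bezout by blast
  then have "monom 1 i \<in> (\<lambda>w. rmod (w \<otimes> z)) ` polys_below (degree y)" if "i < degree f" for i
    using y(2) yz that by (rule monom_mem_image_rmod_mult_right)
  then have "degree f \<le> degree y"
    by (rule le_if_monoms_in_left_linear_image[OF left_linear_rmod_mult_right])
  with y show False by (simp add: polys_below_eq degree_f_pos)
qed

lemma bij_betw_rmod_mult_right: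
  assumes "a \<in> polys_below (degree f)" and "a \<noteq> 0"
  shows "bij_betw (\<lambda>x. rmod (x \<otimes> a)) (polys_below (degree f)) (polys_below (degree f))"
  using assms rmod_skew_mult_neq_0 rmod_mem_polys_below
  by (intro left_linear_bij_betw_polys_below[OF left_linear_rmod_mult_right]) auto

lemma inj_on_rmod_mult_left:
  assumes "a \<in> polys_below (degree f)" and "a \<noteq> 0"
  shows "inj_on (\<lambda>x. rmod (a \<otimes> x)) (polys_below (degree f))"
proof (rule inj_onI)
  fix x y assume xy: "x \<in> polys_below (degree f)" "y \<in> polys_below (degree f)"
    "rmod (a \<otimes> x) = rmod (a \<otimes> y)"
  then have "rmod (a \<otimes> (x - y)) = 0" by (simp add: skew_mult_diff_right rmod_diff)
  then show "x = y"
    using rmod_skew_mult_neq_0[OF assms(1) _ diff_mem_polys_below[OF xy(1,2)]] assms(2) by auto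
qed

lemma rmod_eq_0_if_rmod_power_mult_eq_0:
  assumes "a \<in> polys_below (degree f)" and "a \<noteq> 0"
  shows "rmod (skew_power a n \<otimes> y) = 0 \<Longrightarrow> rmod y = 0"
proof (induction n)
  case (Suc n)
  then have "rmod (a \<otimes> rmod (skew_power a n \<otimes> y)) = 0"
    by (simp add: rmod_skew_mult_rmod skew_mult_assoc)
  then show ?case
    using Suc.IH rmod_skew_mult_neq_0[OF assms(1,2) rmod_mem_polys_below] by blast
qed simp

lemma exists_rmod_mult_left_eq_if_bounded:
  assumes bounded: "skew_bounded \<sigma> \<delta> f"
    and a: "a \<in> polys_below (degree f)" "a \<noteq> 0" and b: "b \<in> polys_below (degree f)"
  shows "\<exists>x\<in>polys_below (degree f). rmod (a \<otimes> x) = b"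
proof -
  obtain fs where fs: "fs \<noteq> 0" "skew_left_ideal_gen \<sigma> \<delta> fs = skew_right_ideal_gen \<sigma> \<delta> fs"
    "skew_left_ideal_gen \<sigma> \<delta> fs \<subseteq> skew_left_ideal_gen \<sigma> \<delta> f"
    using bounded by (auto simp: skew_bounded_def)
  have fs_mult: "rmod (fs \<otimes> s) = 0" for s
    using fs(2,3) by (auto simp: rmod_eq_0_iff skew_right_ideal_gen_def)
  define J where "J n = {skew_power a n \<otimes> r + fs \<otimes> s | r s. True}" for n
  have "right_ideal (J n)" for n
    unfolding J_def by (rule right_ideal_right_combinations)
  moreover have "J (Suc n) \<subseteq> J n" for n
    by (auto simp: J_def skew_power_Suc_right skew_mult_assoc simp del: skew_power.simps(2))
  moreover have "fs \<in> J n" for n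
    unfolding J_def by (rule CollectI, rule exI[of _ 0], rule exI[of _ "[:1:]"]) simp
  ultimately obtain n where "J (Suc n) = J n"
    using right_ideal_chain_stabilizes[OF surj_if_bounded[OF bounded] _ _ _ fs(1)] by blast
  moreover have "skew_power a n \<otimes> b \<in> J n"
    unfolding J_def by (rule CollectI, rule exI[of _ b], rule exI[of _ 0]) simp
  ultimately have "skew_power a n \<otimes> b \<in> J (Suc n)" by simp
  then obtain y s where "skew_power a n \<otimes> b = skew_power a (Suc n) \<otimes> y + fs \<otimes> s"
    unfolding J_def by blast
  then have "skew_power a n \<otimes> (b - a \<otimes> y) = fs \<otimes> s"
    by (simp add: skew_mult_diff_right skew_power_Suc_right skew_mult_assoc del: skew_power.simps(2))
  then have "rmod (b - a \<otimes> y) = 0"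
    using rmod_eq_0_if_rmod_power_mult_eq_0[OF a] fs_mult by metis
  then have "rmod (a \<otimes> rmod y) = b"
    by (simp add: rmod_diff rmod_skew_mult_rmod rmod_eq_self[OF b])
  then show ?thesis using rmod_mem_polys_below by blast
qed

lemma division_algebra_if_bounded:
  assumes "skew_bounded \<sigma> \<delta> f"
  shows "Sf_division_algebra \<sigma> \<delta> f"
  unfolding Sf_division_algebra_def Sf_mult_def Sf_carrier_eq
proof (intro ballI impI conjI)
  fix a :: "'a poly" assume a: "a \<in> polys_below (degree f)" "a \<noteq> 0"
  show "bij_betw (\<lambda>x. rmod (x \<otimes> a)) (polys_below (degree f)) (polys_below (degree f))"
    using bij_betw_rmod_mult_right[OF a] .
  show "bij_betw (\<lambda>x. rmod (a \<otimes> x)) (polys_below (degree f)) (polys_below (degree f))"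
    unfolding bij_betw_def
    using inj_on_rmod_mult_left[OF a] exists_rmod_mult_left_eq_if_bounded[OF assms a]
      rmod_mem_polys_below by blast
qed

end

theorem mainTheorem10:
  fixes \<sigma> \<delta> :: "'a::division_ring \<Rightarrow> 'a" and f :: "'a poly"
  assumes "ring_endo \<sigma>" and "left_sigma_derivation \<sigma> \<delta>"
    and "lead_coeff f = 1" and "degree f \<ge> 2"
    and "skew_irreducible \<sigma> \<delta> f"
  shows "(surj \<sigma> \<and> Sf_nuc_r \<sigma> \<delta> f = range (\<lambda>a. [:a:]) \<longrightarrow>
            skew_bounded \<sigma> \<delta> f \<and> Sf_division_algebra \<sigma> \<delta> f)
       \<and> (skew_bounded \<sigma> \<delta> f \<longrightarrow> Sf_division_algebra \<sigma> \<delta> f)"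
proof -
  interpret skew_poly_irreducible \<sigma> \<delta> f
    using assms by unfold_locales auto
  have "skew_bounded \<sigma> \<delta> f" if "surj \<sigma>" and "Sf_nuc_r \<sigma> \<delta> f = range (\<lambda>a. [:a:])"
  proof (rule bounded_if_const_invariant[OF that(1)])
    fix d
    show "rmod (f \<otimes> [:d:]) = 0"
      using rmod_f_mult_const_eq_0_if_nucleus[OF assms(3,4)] that(2) by blast
  qed
  then show ?thesis using division_algebra_if_bounded by blast
qed

end
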